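(* Let $M=\Pi\backslash\mathrm{Sol}_1^4$ be an infra-$\mathrm{Sol}_1^4$ manifold with $\Pi\subset\mathrm{Sol}_1^4\rtimes D_4$, and let $s$ be its translational involution. Then either $s$ acts freely on $M$, or every component of the fixed point set of $s$ is $2$-dimensional.
   Context: $\mathrm{Sol}_1^4$ is the group of real matrices $\begin{pmatrix}1&e^ux&z\\0&e^u&y\\0&0&1\end{pmatrix}$; its center is $\{x=y=u=0\}\cong\mathbb{R}$. $D_4\subset\mathrm{Aut}(\mathrm{Sol}_1^4)$ is the group of $8$ automorphisms given, for $A=\begin{pmatrix}a&b\\c&d\end{pmatrix}\in\{\begin{pmatrix}\pm1&0\\0&\pm1\end{pmatrix},\begin{pmatrix}0&\pm1\\\pm1&0\end{pmatrix}\}$, by $\begin{pmatrix}1&e^ux&z\\0&e^u&y\\0&0&1\end{pmatrix}\mapsto\begin{pmatrix}1&e^{\bar Au}(ax+by)&\tfrac12(acx^2+2bcxy+bdy^2+2(ad-bc)z)\\0&e^{\bar Au}&cx+dy\\0&0&1\end{pmatrix}$, $\bar A=+1$ for diagonal $A$ and $-1$ otherwise. An infra-$\mathrm{Sol}_1^4$ manifold is $M=\Pi\backslash\mathrm{Sol}_1^4$ with $\Pi$ a discrete, cocompact, torsion-free subgroup of $\mathrm{Sol}_1^4\rtimes D_4$ acting by $(a,A)\cdot g=a\,A(g)$. The intersection of $\Pi$ with the center is infinite cyclic, generated by the central element with $z=1/q$ ($q>0$). Let $s$ be the central element with $z=1/(2q)$; for every $\alpha\in\Pi$ one has $s\alpha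 s^{-1}=\alpha$ or $s\alpha s^{-1}=s^2\alpha$, so $s$ normalizes $\Pi$ and its action on $\mathrm{Sol}_1^4$ descends to an involution of $M$, called the translational involution. *)

theory Defs
  imports "HOL-Analysis.Analysis"
begin

text \<open>Elements of Sol_1^4 are encoded by their coordinates (x,y,z,u), standing for the matrix
  [[1, e^u x, z],[0, e^u, y],[0,0,1]].  Matrix multiplication gives the law below.\<close>

type_synonym sol = "real \<times> real \<times> real \<times> real"

fun sol_mult :: "sol \<Rightarrow> sol \<Rightarrow> sol" where
  "sol_mult (x, y, z, u) (x', y', z', u') =
     (x + exp (- u) * x', y + exp u * y', z + z' + exp u * x * y', u + u')"

definition sol_one :: sol where "sol_one = (0, 0, 0, 0)"

text \<open>Integer 2x2 matrices (a,b,c,d) = [[a,b],[c,d]].\<close>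
type_synonym mat2 = "int \<times> int \<times> int \<times> int"

definition D4 :: "mat2 set" where
  "D4 = {(a, 0, 0, d) | a d. \<bar>a\<bar> = 1 \<and> \<bar>d\<bar> = 1} \<union> {(0, b, c, 0) | b c. \<bar>b\<bar> = 1 \<and> \<bar>c\<bar> = 1}"

definition mat2_one :: mat2 where "mat2_one = (1, 0, 0, 1)"

fun mat2_mult :: "mat2 \<Rightarrow> mat2 \<Rightarrow> mat2" where
  "mat2_mult (a, b, c, d) (a', b', c', d') =
     (a * a' + b * c', a * b' + b * d', c * a' + d * c', c * b' + d * d')"

fun Abar :: "mat2 \<Rightarrow> real" where
  "Abar (a, b, c, d) = (if b = 0 \<and> c = 0 then 1 else -1)"

fun sol_aut :: "mat2 \<Rightarrow> sol \<Rightarrow> sol" where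
  "sol_aut (a, b, c, d) (x, y, z, u) =
     (of_int a * x + of_int b * y,
      of_int c * x + of_int d * y,
      (of_int (a * c) * x\<^sup>2 + 2 * of_int (b * c) * x * y + of_int (b * d) * y\<^sup>2
         + 2 * of_int (a * d - b * c) * z) / 2,
      Abar (a, b, c, d) * u)"

type_synonym aff = "sol \<times> mat2"

fun aff_mult :: "aff \<Rightarrow> aff \<Rightarrow> aff" where
  "aff_mult (a, A) (b, B) = (sol_mult a (sol_aut A b), mat2_mult A B)"

definition aff_one :: aff where "aff_one = (sol_one, mat2_one)"

fun aff_pow :: "aff \<Rightarrow> nat \<Rightarrow> aff" where
  "aff_pow p 0 = aff_one"
| "aff_pow p (Suc n) = aff_mult p (aff_pow p n)"

fun aff_act :: "aff \<Rightarrow> sol \<Rightarrow> sol" where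
  "aff_act (a, A) g = sol_mult a (sol_aut A g)"

text \<open>\<Gamma> is a discrete, cocompact, torsion-free subgroup of Sol_1^4 \<rtimes> D4
  (topology on Sol_1^4: Euclidean topology in the coordinates (x,y,z,u); D4 discrete).\<close>
definition infra_sol_group :: "aff set \<Rightarrow> bool" where
  "infra_sol_group \<Gamma> \<longleftrightarrow>
     \<Gamma> \<subseteq> UNIV \<times> D4 \<and>
     aff_one \<in> \<Gamma> \<and>
     (\<forall>p\<in>\<Gamma>. \<forall>q\<in>\<Gamma>. aff_mult p q \<in> \<Gamma>) \<and>
     (\<forall>p\<in>\<Gamma>. \<exists>q\<in>\<Gamma>. aff_mult p q = aff_one) \<and>
     (\<forall>p\<in>\<Gamma>. \<exists>e>0. \<forall>p'\<in>\<Gamma>. snd p' = snd p \<and> dist (fst p') (fst p) < e \<longrightarrow> p' = p) \<and>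
     (\<exists>K. compact K \<and> (\<Union>p\<in>\<Gamma>. aff_act p ` K) = UNIV) \<and>
     (\<forall>p\<in>\<Gamma>. \<forall>n>0. aff_pow p n = aff_one \<longrightarrow> p = aff_one)"

definition orbit :: "aff set \<Rightarrow> sol \<Rightarrow> sol set" where
  "orbit \<Gamma> g = (\<lambda>p. aff_act p g) ` \<Gamma>"

definition orbit_space :: "aff set \<Rightarrow> sol set set" where
  "orbit_space \<Gamma> = range (orbit \<Gamma>)"

definition M_top :: "aff set \<Rightarrow> sol set topology" where
  "M_top \<Gamma> = topology (\<lambda>U. U \<subseteq> orbit_space \<Gamma> \<and> open (\<Union>U))"

definition central :: "real \<Rightarrow> sol" where "central z = (0, 0, z, 0)"

definition fixed_set :: "aff set \<Rightarrow> sol \<Rightarrow> sol set set" where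
  "fixed_set \<Gamma> s = {orbit \<Gamma> g | g. orbit \<Gamma> (sol_mult s g) = orbit \<Gamma> g}"

definition two_dimensional :: "'a topology \<Rightarrow> bool" where
  "two_dimensional X \<longleftrightarrow>
     (\<forall>p\<in>topspace X. \<exists>U. openin X U \<and> p \<in> U \<and>
        subtopology X U homeomorphic_space (euclidean :: (real \<times> real) topology))"

end

theory Submission
  imports Defs
begin

text \<open>Write s for the central element with z = 1/(2q). Automorphisms in D4 of determinant 1 fix
  the centre and those of determinant -1 invert it, so s commutes with \<Gamma> up to the factor
  s^2 \<in> \<Gamma>; a point \<Gamma>g of M is fixed by s exactly when p g = s g for some p \<in> \<Gamma>.
  The action of \<Gamma> is free (D4 has exponent 4 and \<Gamma> is torsion-free) and properly
  discontinuous, so near g the orbit map is injective and the fixed set is the image of the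
  solution set of p h = s h for one p. That p has holonomy neither 1 (as s \<notin> \<Gamma>) nor
  antidiagonal (as p^2 g would be g or s^2 g), so its holonomy is diag(1,-1), diag(-1,1) or -1,
  and in each case the equation p h = s h cuts out an affine plane in the coordinates (x,y,z,u).\<close>

lemma D4_eq:
  "D4 = {(1,0,0,1), (1,0,0,-1), (-1,0,0,1), (-1,0,0,-1), (0,1,1,0), (0,1,-1,0), (0,-1,1,0), (0,-1,-1,0)}"
proof -
  have "\<bar>a\<bar> = 1 \<longleftrightarrow> a = 1 \<or> a = -1" for a :: int by arith
  then show ?thesis unfolding D4_def by auto
qed

lemma finite_D4: "finite D4"
  unfolding D4_eq by simp

lemma sol_mult_assoc: "sol_mult (sol_mult a b) c = sol_mult a (sol_mult b c)"
  by (cases a; cases b; cases c) (simp add: algebra_simps flip: exp_add)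

lemma sol_mult_one [simp]: "sol_mult sol_one g = g" "sol_mult g sol_one = g"
  by (cases g; simp add: sol_one_def)+

fun sol_inv :: "sol \<Rightarrow> sol" where
  "sol_inv (x, y, z, u) = (- exp u * x, - exp (- u) * y, x * y - z, - u)"

lemma sol_mult_inv_left: "sol_mult (sol_inv a) a = sol_one"
  by (cases a) (simp add: sol_one_def exp_minus field_simps)

lemma sol_mult_inv_cancel_left: "sol_mult (sol_inv a) (sol_mult a g) = g"
  by (cases a; cases g) (simp add: exp_minus field_simps)

lemma sol_mult_inv_cancel_right: "sol_mult (sol_mult g a) (sol_inv a) = g"
  by (cases a; cases g) (simp add: exp_add exp_diff exp_minus field_simps)

lemma sol_mult_right_cancel: "sol_mult a g = sol_mult b g \<Longrightarrow> a = b"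
  by (metis sol_mult_inv_cancel_right)

lemma sol_aut_mult: "A \<in> D4 \<Longrightarrow> sol_aut A (sol_mult g h) = sol_mult (sol_aut A g) (sol_aut A h)"
  unfolding D4_eq by (cases g; cases h) (auto simp: exp_minus field_simps power2_eq_square)

lemma sol_aut_mat2_mult:
  "A \<in> D4 \<Longrightarrow> B \<in> D4 \<Longrightarrow> sol_aut (mat2_mult A B) g = sol_aut A (sol_aut B g)"
  unfolding D4_eq by (cases g) (auto simp: field_simps power2_eq_square)

lemma sol_aut_mat2_one [simp]: "sol_aut mat2_one g = g"
  by (cases g) (simp add: mat2_one_def)

lemma sol_aut_sol_one [simp]: "sol_aut A sol_one = sol_one"
  by (cases A) (simp add: sol_one_def)

definition mat2_transpose :: "mat2 \<Rightarrow> mat2" where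
  "mat2_transpose A = (case A of (a, b, c, d) \<Rightarrow> (a, c, b, d))"

lemma mat2_transpose_D4 [simp]: "A \<in> D4 \<Longrightarrow> mat2_transpose A \<in> D4"
  unfolding D4_eq by (auto simp: mat2_transpose_def)

lemma mat2_transpose_transpose [simp]: "mat2_transpose (mat2_transpose A) = A"
  by (cases A) (simp add: mat2_transpose_def)

lemma mat2_mult_transpose_left: "A \<in> D4 \<Longrightarrow> mat2_mult (mat2_transpose A) A = mat2_one"
  unfolding D4_eq by (auto simp: mat2_one_def mat2_transpose_def)

lemma mat2_right_inverse_D4:
  "A \<in> D4 \<Longrightarrow> B \<in> D4 \<Longrightarrow> mat2_mult A B = mat2_one \<Longrightarrow> B = mat2_transpose A"
  unfolding D4_eq by (auto simp: mat2_one_def mat2_transpose_def)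

lemma sol_aut_transpose: "A \<in> D4 \<Longrightarrow> sol_aut (mat2_transpose A) (sol_aut A g) = g"
  by (simp flip: sol_aut_mat2_mult add: mat2_mult_transpose_left)

lemma mat2_pow4_D4: "A \<in> D4 \<Longrightarrow> mat2_mult A (mat2_mult A (mat2_mult A (mat2_mult A mat2_one))) = mat2_one"
  unfolding D4_eq by (auto simp: mat2_one_def)

lemma aff_act_one [simp]: "aff_act aff_one g = g"
  by (simp add: aff_one_def)

lemma aff_mult_one_right [simp]: "aff_mult p aff_one = p"
  by (cases p) (simp add: aff_one_def mat2_one_def)

lemma snd_aff_mult: "snd (aff_mult p r) = mat2_mult (snd p) (snd r)"
  by (cases p; cases r) simp

lemma fst_eq_aff_act_sol_one: "fst p = aff_act p sol_one"
  by (cases p) simp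

lemma aff_act_mult:
  assumes "snd p \<in> D4" "snd r \<in> D4"
  shows "aff_act (aff_mult p r) g = aff_act p (aff_act r g)"
proof -
  obtain a A b B where "p = (a, A)" "r = (b, B)" by (metis prod.collapse)
  then show ?thesis using assms by (simp add: sol_aut_mat2_mult sol_aut_mult sol_mult_assoc)
qed

lemma aff_act_inj: "snd p \<in> D4 \<Longrightarrow> aff_act p g = aff_act p h \<Longrightarrow> g = h"
  by (cases p) (metis aff_act.simps snd_conv sol_aut_transpose sol_mult_inv_cancel_left)

lemma aff_act_solve:
  assumes "snd r \<in> D4" "aff_act r x = y"
  shows "x = sol_aut (mat2_transpose (snd r)) (sol_mult (sol_inv (fst r)) y)"
proof -
  obtain a A where "r = (a, A)" by (metis prod.collapse)
  then show ?thesis using assms by (auto simp: sol_mult_inv_cancel_left sol_aut_transpose)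
qed

lemma fst_eq_aff_act_mult_inv: "fst r = sol_mult (aff_act r h) (sol_inv (sol_aut (snd r) h))"
  by (cases r) (simp add: sol_mult_inv_cancel_right)

definition mat2_det :: "mat2 \<Rightarrow> int" where
  "mat2_det A = (case A of (a, b, c, d) \<Rightarrow> a * d - b * c)"

lemma mat2_det_D4: "A \<in> D4 \<Longrightarrow> mat2_det A = 1 \<or> mat2_det A = -1"
  unfolding D4_eq by (auto simp: mat2_det_def)

lemma central_zero: "central 0 = sol_one"
  by (simp add: central_def sol_one_def)

lemma central_mult_central:
  "sol_mult (central t) (sol_mult (central t') g) = sol_mult (central (t + t')) g"
  by (cases g) (simp add: central_def)

lemma central_commute: "sol_mult a (sol_mult (central t) g) = sol_mult (central t) (sol_mult a g)"
  by (cases a; cases g) (simp add: central_def)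

lemma central_mult: "sol_mult (central t) (x, y, z, u) = (x, y, t + z, u)"
  by (simp add: central_def)

lemma dist_central_mult: "dist (sol_mult (central t) g) (sol_mult (central t) h) = dist g h"
  by (cases g; cases h) (simp add: central_mult dist_Pair_Pair dist_real_def)

lemma aff_act_central:
  assumes "A \<in> D4"
  shows "aff_act (a, A) (sol_mult (central t) g) = sol_mult (central (of_int (mat2_det A) * t)) (aff_act (a, A) g)"
proof -
  have "sol_aut A (sol_mult (central t) g) = sol_mult (central (of_int (mat2_det A) * t)) (sol_aut A g)"
    using assms unfolding D4_eq by (cases g) (auto simp: central_def mat2_det_def)
  then show ?thesis by (simp add: central_commute)
qed

lemmas continuous_on_coordinate_intros = continuous_on_Pair continuous_on_add continuous_on_diff
  continuous_on_minus continuous_on_mult continuous_on_power continuous_on_exp continuous_on_const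
  continuous_on_fst continuous_on_snd continuous_on_id

lemma continuous_on_sol_mult [continuous_intros]:
  assumes "continuous_on S f" "continuous_on S g"
  shows "continuous_on S (\<lambda>x. sol_mult (f x) (g x))"
proof -
  have "sol_mult a b = (fst a + exp (- snd (snd (snd a))) * fst b,
      fst (snd a) + exp (snd (snd (snd a))) * fst (snd b),
      fst (snd (snd a)) + fst (snd (snd b)) + exp (snd (snd (snd a))) * fst a * fst (snd b),
      snd (snd (snd a)) + snd (snd (snd b)))" for a b
    by (cases a; cases b) simp
  then show ?thesis
    by (simp only:) (intro continuous_on_coordinate_intros assms)
qed

lemma continuous_on_sol_inv [continuous_intros]:
  assumes "continuous_on S f"
  shows "continuous_on S (\<lambda>x. sol_inv (f x))"
proof -
  have "sol_inv a = (- exp (snd (snd (snd a))) * fst a, - exp (- snd (snd (snd a))) * fst (snd a),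
      fst a * fst (snd a) - fst (snd (snd a)), - snd (snd (snd a)))" for a
    by (cases a) simp
  then show ?thesis
    by (simp only:) (intro continuous_on_coordinate_intros assms)
qed

lemma continuous_on_sol_aut [continuous_intros]:
  assumes "continuous_on S f"
  shows "continuous_on S (\<lambda>x. sol_aut A (f x))"
proof -
  obtain a b c d where A: "A = (a, b, c, d)" by (cases A)
  have "sol_aut A v = (of_int a * fst v + of_int b * fst (snd v),
      of_int c * fst v + of_int d * fst (snd v),
      (of_int (a * c) * (fst v)\<^sup>2 + 2 * of_int (b * c) * fst v * fst (snd v)
        + of_int (b * d) * (fst (snd v))\<^sup>2 + 2 * of_int (a * d - b * c) * fst (snd (snd v))) * (1 / 2),
      Abar A * snd (snd (snd v)))" for v
    unfolding A by (cases v) (simp add: field_simps)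
  then show ?thesis
    by (simp only:) (intro continuous_on_coordinate_intros assms)
qed

lemma continuous_on_aff_act [continuous_intros]:
  assumes "continuous_on S f"
  shows "continuous_on S (\<lambda>x. aff_act p (f x))"
  by (cases p) (simp add: continuous_intros assms)

lemma dist_Pair_le: "dist (a, b) (c, d) \<le> dist a c + dist b d"
  unfolding dist_Pair_Pair using sqrt_sum_squares_le_sum_abs[of "dist a c" "dist b d"] by simp

lemma dist_Pair4_le:
  "dist (a, b, c, d) (a', b', c', d') \<le> dist a a' + dist b b' + dist c c' + dist d d'"
  using dist_Pair_le[of a "(b, c, d)" a' "(b', c', d')"] dist_Pair_le[of b "(c, d)" b' "(c', d')"]
    dist_Pair_le[of c d c' d'] by linarith

lemma finite_uniform_positive_bound:
  fixes P :: "'a \<Rightarrow> real \<Rightarrow> bool"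
  assumes "finite S" "\<And>A. A \<in> S \<Longrightarrow> \<exists>\<delta>>0. P A \<delta>"
    and "\<And>A \<delta> \<delta>'. P A \<delta> \<Longrightarrow> 0 < \<delta>' \<Longrightarrow> \<delta>' \<le> \<delta> \<Longrightarrow> P A \<delta>'"
  shows "\<exists>\<delta>>0. \<forall>A\<in>S. P A \<delta>"
  using assms(1,2)
proof (induction S rule: finite_induct)
  case empty
  show ?case by (rule exI[of _ 1]) simp
next
  case (insert A S)
  obtain d1 where "d1 > 0" "\<forall>B\<in>S. P B d1" using insert by blast
  moreover obtain d2 where "d2 > 0" "P A d2" using insert by blast
  ultimately show ?case
    by (intro exI[of _ "min d1 d2"]) (use assms(3) in auto)
qed

lemma continuous_near_value_imp_eq:
  fixes f :: "'a::metric_space \<Rightarrow> 'b::metric_space"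
  assumes "continuous_on UNIV f"
  shows "\<exists>\<delta>>0. \<forall>h. dist h g < \<delta> \<longrightarrow> dist (f h) k < \<delta> \<longrightarrow> f g = k"
proof (cases "f g = k")
  case True
  then show ?thesis by (intro exI[of _ 1]) simp
next
  case False
  then have D: "dist (f g) k > 0" by simp
  then obtain \<eta> where \<eta>: "\<eta> > 0" "\<And>h. dist h g < \<eta> \<Longrightarrow> dist (f h) (f g) < dist (f g) k / 2"
    using assms unfolding continuous_on_iff by (metis UNIV_I half_gt_zero)
  have False if "dist h g < min \<eta> (dist (f g) k / 2)" "dist (f h) k < min \<eta> (dist (f g) k / 2)" for h
    using that \<eta>(2)[of h] dist_triangle[of "f g" k "f h"] by (simp add: dist_commute)
  then show ?thesis using \<eta>(1) D by (intro exI[of _ "min \<eta> (dist (f g) k / 2)"]) auto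
qed

lemma ball_homeomorphic_space_euclidean:
  fixes v :: "'a::euclidean_space"
  assumes "\<rho> > 0"
  shows "top_of_set (ball v \<rho>) homeomorphic_space (euclidean :: 'a topology)"
proof -
  obtain f g where "homeomorphism (ball v \<rho>) (UNIV :: 'a set) f g"
    using homeomorphic_ball_UNIV[OF assms, of v] unfolding homeomorphic_def by blast
  then have "homeomorphic_maps (top_of_set (ball v \<rho>)) (top_of_set UNIV) f g"
    unfolding homeomorphism_def homeomorphic_maps_def by (auto simp: continuous_map_in_subtopology)
  then show ?thesis unfolding homeomorphic_space_def by auto
qed

lemma homeomorphic_map_through_open_quotient:
  fixes q :: "'a::topological_space \<Rightarrow> 'b" and \<phi> :: "'c::topological_space \<Rightarrow> 'a"
  assumes q: "continuous_map euclidean X q" "\<And>S. open S \<Longrightarrow> openin X (q ` S)"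
    and B: "open B" "inj_on q B"
    and V: "open V" "continuous_on V \<phi>" "\<phi> ` V \<subseteq> B"
    and \<pi>: "continuous_on B \<pi>" "\<And>v. v \<in> V \<Longrightarrow> \<pi> (\<phi> v) = v"
  shows "homeomorphic_map (top_of_set V) (subtopology X (q ` \<phi> ` V)) (q \<circ> \<phi>)"
proof (rule bijective_open_imp_homeomorphic_map)
  have "continuous_map (top_of_set V) X (q \<circ> \<phi>)"
    using continuous_map_compose[of "top_of_set V" euclidean \<phi>] V(2) q(1) by simp
  then show "continuous_map (top_of_set V) (subtopology X (q ` \<phi> ` V)) (q \<circ> \<phi>)"
    by (simp add: continuous_map_in_subtopology image_comp)
  show "open_map (top_of_set V) (subtopology X (q ` \<phi> ` V)) (q \<circ> \<phi>)"
    unfolding open_map_def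
  proof (intro allI impI)
    fix W assume "openin (top_of_set V) W"
    then have W: "open W" "W \<subseteq> V" using V(1) by (auto simp: openin_open_eq)
    have "(q \<circ> \<phi>) ` W = q ` (B \<inter> \<pi> -` W) \<inter> q ` \<phi> ` V"
    proof
      show "(q \<circ> \<phi>) ` W \<subseteq> q ` (B \<inter> \<pi> -` W) \<inter> q ` \<phi> ` V"
      proof
        fix y assume "y \<in> (q \<circ> \<phi>) ` W"
        then obtain v where "v \<in> W" "y = q (\<phi> v)" by auto
        moreover have "\<phi> v \<in> B \<inter> \<pi> -` W" using \<open>v \<in> W\<close> W(2) V(3) \<pi>(2) by auto
        ultimately show "y \<in> q ` (B \<inter> \<pi> -` W) \<inter> q ` \<phi> ` V" using W(2) by blast
      qed
      show "q ` (B \<inter> \<pi> -` W) \<inter> q ` \<phi> ` V \<subseteq> (q \<circ> \<phi>) ` W"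
      proof
        fix y assume "y \<in> q ` (B \<inter> \<pi> -` W) \<inter> q ` \<phi> ` V"
        then obtain w v where w: "w \<in> B" "\<pi> w \<in> W" and v: "v \<in> V" and y: "y = q w" "y = q (\<phi> v)"
          by blast
        then have "w = \<phi> v" using B(2) V(3) by (auto dest: inj_onD)
        then show "y \<in> (q \<circ> \<phi>) ` W" using w v y \<pi>(2) by auto
      qed
    qed
    moreover have "openin X (q ` (B \<inter> \<pi> -` W))"
      using q(2) continuous_on_open_vimage[OF B(1)] \<pi>(1) W(1) by (metis Int_commute)
    ultimately show "openin (subtopology X (q ` \<phi> ` V)) ((q \<circ> \<phi>) ` W)"
      unfolding openin_subtopology by blast
  qed
  show "(q \<circ> \<phi>) ` topspace (top_of_set V) = topspace (subtopology X (q ` \<phi> ` V))"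
    using continuous_map_image_subset_topspace[OF q(1)] by auto
  show "inj_on (q \<circ> \<phi>) (topspace (top_of_set V))"
  proof (rule inj_onI)
    fix v v' assume "v \<in> topspace (top_of_set V)" "v' \<in> topspace (top_of_set V)" "(q \<circ> \<phi>) v = (q \<circ> \<phi>) v'"
    then have "\<phi> v = \<phi> v'" using B(2) V(3) by (auto dest: inj_onD)
    then show "v = v'" using \<pi>(2) \<open>v \<in> _\<close> \<open>v' \<in> _\<close> by (metis topspace_euclidean_subtopology)
  qed
qed

lemma two_dimensional_connected_components:
  assumes "\<And>x. x \<in> F \<Longrightarrow> \<exists>U. openin (subtopology X F) U \<and> x \<in> U \<and>
             subtopology X U homeomorphic_space (euclidean :: (real \<times> real) topology)"
  shows "\<forall>C \<in> connected_components_of (subtopology X F). two_dimensional (subtopology X C)"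
proof
  fix C assume C: "C \<in> connected_components_of (subtopology X F)"
  have CF: "C \<subseteq> topspace X \<inter> F" using connected_components_of_subset[OF C] by simp
  show "two_dimensional (subtopology X C)" unfolding two_dimensional_def
  proof
    fix x assume "x \<in> topspace (subtopology X C)"
    then have x: "x \<in> C" "x \<in> F" using CF by auto
    obtain U where U: "openin (subtopology X F) U" "x \<in> U"
      and hom: "subtopology X U homeomorphic_space (euclidean :: (real \<times> real) topology)"
      using assms[OF x(2)] by blast
    obtain W where W: "openin X W" "U = W \<inter> F" using U(1) by (auto simp: openin_subtopology)
    have "connected_space (euclidean :: (real \<times> real) topology)"
      using connected_UNIV[where 'a="real \<times> real"]
        connectedin_topspace[of "euclidean :: (real \<times> real) topology"] by simp
    then have "connected_space (subtopology X U)"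
      using homeomorphic_connected_space[OF hom] by simp
    moreover have "U \<subseteq> topspace X \<inter> F" using openin_subset[OF U(1)] by simp
    ultimately have "connectedin X U" unfolding connectedin_def by simp
    then have "connectedin (subtopology X F) U"
      using \<open>U \<subseteq> topspace X \<inter> F\<close> by (simp add: connectedin_subtopology)
    then have UC: "U \<subseteq> C"
      using connected_components_of_maximal[OF C] x(1) U(2) by (auto simp: disjnt_def)
    then have "U = W \<inter> C" using W(2) CF by blast
    then have "openin (subtopology X C) U"
      using W(1) unfolding openin_subtopology by blast
    moreover have "subtopology (subtopology X C) U = subtopology X U"
      using UC by (simp add: subtopology_subtopology Int_absorb1)
    ultimately show "\<exists>U. openin (subtopology X C) U \<and> x \<in> U \<and>
        subtopology (subtopology X C) U homeomorphic_space (euclidean :: (real \<times> real) topology)"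
      using U(2) hom by auto
  qed
qed

locale infra_sol_manifold =
  fixes \<Gamma> :: "aff set" and q :: real
  assumes infra_sol_group: "infra_sol_group \<Gamma>" and q_pos: "q > 0"
    and central_part:
      "\<Gamma> \<inter> {(central z, mat2_one) | z. True} = {(central (of_int k / q), mat2_one) | k. True}"
begin

lemma holonomy_in_D4: "p \<in> \<Gamma> \<Longrightarrow> snd p \<in> D4"
  using infra_sol_group unfolding infra_sol_group_def by (auto simp: mem_Times_iff)

lemma one_in: "aff_one \<in> \<Gamma>"
  using infra_sol_group unfolding infra_sol_group_def by auto

lemma mult_in: "p \<in> \<Gamma> \<Longrightarrow> r \<in> \<Gamma> \<Longrightarrow> aff_mult p r \<in> \<Gamma>"
  using infra_sol_group unfolding infra_sol_group_def by auto

lemma right_inverse_in: "p \<in> \<Gamma> \<Longrightarrow> \<exists>p'\<in>\<Gamma>. aff_mult p p' = aff_one"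
  using infra_sol_group unfolding infra_sol_group_def by auto

lemma discrete:
  "p \<in> \<Gamma> \<Longrightarrow> \<exists>e>0. \<forall>p'\<in>\<Gamma>. snd p' = snd p \<and> dist (fst p') (fst p) < e \<longrightarrow> p' = p"
  using infra_sol_group unfolding infra_sol_group_def by auto

lemma discrete_at_one:
  obtains e where "e > 0"
    "\<And>p. p \<in> \<Gamma> \<Longrightarrow> snd p = mat2_one \<Longrightarrow> dist (fst p) sol_one < e \<Longrightarrow> p = aff_one"
  using discrete[OF one_in] unfolding aff_one_def by auto

lemma torsion_free: "p \<in> \<Gamma> \<Longrightarrow> n > 0 \<Longrightarrow> aff_pow p n = aff_one \<Longrightarrow> p = aff_one"
  using infra_sol_group unfolding infra_sol_group_def by auto

lemma act_mult: "p \<in> \<Gamma> \<Longrightarrow> r \<in> \<Gamma> \<Longrightarrow> aff_act (aff_mult p r) g = aff_act p (aff_act r g)"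
  by (simp add: aff_act_mult holonomy_in_D4)

lemma inverse_in:
  assumes "p \<in> \<Gamma>"
  obtains p' where "p' \<in> \<Gamma>" "aff_mult p p' = aff_one"
    "\<And>g. aff_act p (aff_act p' g) = g" "\<And>g. aff_act p' (aff_act p g) = g"
proof -
  obtain p' where p': "p' \<in> \<Gamma>" "aff_mult p p' = aff_one" using right_inverse_in[OF assms] by blast
  have pp': "aff_act p (aff_act p' g) = g" for g using act_mult[OF assms p'(1), of g] p'(2) by simp
  moreover have "aff_act p' (aff_act p g) = g" for g
    using pp'[of "aff_act p g"] aff_act_inj[OF holonomy_in_D4[OF assms]] by blast
  ultimately show ?thesis using that p' by blast
qed

lemma aff_pow_in: "p \<in> \<Gamma> \<Longrightarrow> aff_pow p n \<in> \<Gamma>"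
  by (induction n) (auto simp: one_in mult_in)

text \<open>The holonomy group D4 has exponent 4, so p^4 is a pure translation; a translation with a
  fixed point is trivial, and torsion-freeness then gives p = 1.\<close>
lemma fixed_point_imp_eq_one:
  assumes "p \<in> \<Gamma>" "aff_act p g = g"
  shows "p = aff_one"
proof -
  have "snd (aff_pow p 4) = mat2_one"
    using mat2_pow4_D4[OF holonomy_in_D4[OF assms(1)]]
    by (simp add: numeral_eq_Suc snd_aff_mult aff_one_def)
  then obtain c where c: "aff_pow p 4 = (c, mat2_one)" by (metis prod.collapse)
  have "aff_act (aff_pow p n) g = g" for n
    by (induction n) (simp_all add: act_mult aff_pow_in assms)
  from this[of 4] have "sol_mult c g = sol_mult sol_one g" by (simp add: c)
  then have "c = sol_one" by (rule sol_mult_right_cancel)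
  then show ?thesis using torsion_free[OF assms(1), of 4] c by (simp add: aff_one_def)
qed

lemma holonomy_right_inverse:
  assumes "r \<in> \<Gamma>" "r' \<in> \<Gamma>" "aff_mult r r' = aff_one"
  shows "snd r' = mat2_transpose (snd r)"
proof -
  have "mat2_mult (snd r) (snd r') = mat2_one"
    using assms(3) snd_aff_mult[of r r'] by (simp add: aff_one_def)
  then show ?thesis using mat2_right_inverse_D4 holonomy_in_D4 assms(1,2) by blast
qed

lemma holonomy_eq_if_act_eq:
  assumes "p \<in> \<Gamma>" "r \<in> \<Gamma>" "aff_act p g = aff_act r g"
  shows "snd p = snd r"
proof -
  obtain r' where r': "r' \<in> \<Gamma>" "aff_mult r r' = aff_one" "\<And>g. aff_act r' (aff_act r g) = g"
    using inverse_in[OF assms(2)] by metis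
  have "aff_act (aff_mult r' p) g = g" using act_mult[OF r'(1) assms(1)] assms(3) r'(3) by simp
  then have "aff_mult r' p = aff_one" using fixed_point_imp_eq_one mult_in r'(1) assms(1) by blast
  then have "mat2_mult (mat2_transpose (snd r)) (snd p) = mat2_one"
    using snd_aff_mult[of r' p] holonomy_right_inverse[OF assms(2) r'(1,2)] by (simp add: aff_one_def)
  then show ?thesis
    using mat2_right_inverse_D4[of "mat2_transpose (snd r)" "snd p"] holonomy_in_D4 assms by simp
qed

lemma act_eq_if_agree_at:
  assumes "p \<in> \<Gamma>" "r \<in> \<Gamma>" "aff_act p g = aff_act r g"
  shows "aff_act p = aff_act r"
proof
  fix x
  obtain p' where p': "p' \<in> \<Gamma>" "\<And>x. aff_act p (aff_act p' x) = x" "\<And>x. aff_act p' (aff_act p x) = x"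
    using inverse_in[OF assms(1)] by metis
  have "aff_act (aff_mult p' r) g = g" unfolding act_mult[OF p'(1) assms(2)] assms(3)[symmetric] p'(3) ..
  then have "aff_mult p' r = aff_one" using fixed_point_imp_eq_one mult_in p'(1) assms(2) by blast
  moreover have "aff_act r x = aff_act p (aff_act (aff_mult p' r) x)"
    unfolding act_mult[OF p'(1) assms(2)] p'(2) ..
  ultimately show "aff_act p x = aff_act r x" by simp
qed

definition s :: sol where "s = central (1 / (2 * q))"

lemma s_squared_in: "(central (1 / q), mat2_one) \<in> \<Gamma>"
proof -
  have "(central (of_int 1 / q), mat2_one) \<in> {(central (of_int k / q), mat2_one) | k. True}" by blast
  then show ?thesis using central_part by auto
qed

lemma s_notin: "(s, mat2_one) \<notin> \<Gamma>"
proof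
  assume "(s, mat2_one) \<in> \<Gamma>"
  then obtain k :: int where "central (1 / (2 * q)) = central (of_int k / q)"
    using central_part unfolding s_def by blast
  then have "1 = 2 * (of_int k :: real)" using q_pos by (simp add: central_def field_simps)
  then have "1 = 2 * k" by linarith
  then show False by presburger
qed

text \<open>For holonomy of determinant -1 the conjugate of r by s is s^2 r.\<close>
lemma s_normalizes:
  assumes "r \<in> \<Gamma>"
  shows "\<exists>r'\<in>\<Gamma>. \<forall>h. sol_mult s (aff_act r h) = aff_act r' (sol_mult s h)"
proof -
  obtain a A where r: "r = (a, A)" by (cases r)
  have A: "A \<in> D4" using holonomy_in_D4 assms r by fastforce
  consider "mat2_det A = 1" | "mat2_det A = -1" using mat2_det_D4[OF A] by blast
  then show ?thesis
  proof cases
    case 1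
    then have "sol_mult s (aff_act r h) = aff_act r (sol_mult s h)" for h
      unfolding r s_def aff_act_central[OF A] by simp
    then show ?thesis using assms by blast
  next
    case 2
    let ?s2 = "(central (1 / q), mat2_one)"
    have "sol_mult s (aff_act r h) = aff_act (aff_mult ?s2 r) (sol_mult s h)" for h
    proof -
      have "aff_act (aff_mult ?s2 r) (sol_mult s h) = aff_act ?s2 (aff_act r (sol_mult s h))"
        by (rule act_mult[OF s_squared_in assms])
      also have "\<dots> = sol_mult (central (1 / q)) (sol_mult (central (- (1 / (2 * q)))) (aff_act r h))"
        unfolding r s_def aff_act_central[OF A] 2 by simp
      also have "\<dots> = sol_mult s (aff_act r h)"
        unfolding central_mult_central s_def using q_pos by (simp add: field_simps)
      finally show ?thesis by simp
    qed
    then show ?thesis using mult_in[OF s_squared_in assms] by blast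
  qed
qed

lemma mem_orbit_iff: "h \<in> orbit \<Gamma> g \<longleftrightarrow> (\<exists>p\<in>\<Gamma>. h = aff_act p g)"
  unfolding orbit_def by auto

lemma mem_orbit_self: "g \<in> orbit \<Gamma> g"
  unfolding mem_orbit_iff using one_in aff_act_one by force

lemma orbit_trans:
  assumes "h \<in> orbit \<Gamma> g" "k \<in> orbit \<Gamma> h"
  shows "k \<in> orbit \<Gamma> g"
proof -
  obtain p r where "p \<in> \<Gamma>" "h = aff_act p g" "r \<in> \<Gamma>" "k = aff_act r h"
    using assms mem_orbit_iff by blast
  then have "aff_mult r p \<in> \<Gamma>" "k = aff_act (aff_mult r p) g" by (simp_all add: mult_in act_mult)
  then show ?thesis unfolding mem_orbit_iff by blast
qed

lemma orbit_sym:
  assumes "h \<in> orbit \<Gamma> g"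
  shows "g \<in> orbit \<Gamma> h"
proof -
  obtain p where p: "p \<in> \<Gamma>" "h = aff_act p g" using assms mem_orbit_iff by blast
  obtain p' where "p' \<in> \<Gamma>" "\<And>g. aff_act p' (aff_act p g) = g" using inverse_in[OF p(1)] by metis
  then show ?thesis unfolding mem_orbit_iff p(2) by (intro bexI[of _ p']) simp_all
qed

lemma orbit_eqI: "h \<in> orbit \<Gamma> g \<Longrightarrow> orbit \<Gamma> h = orbit \<Gamma> g"
  using orbit_sym orbit_trans by blast

lemma orbit_eq_iff: "orbit \<Gamma> g = orbit \<Gamma> h \<longleftrightarrow> h \<in> orbit \<Gamma> g"
  using orbit_eqI mem_orbit_self by blast

definition fixed_preimage :: "sol set" where
  "fixed_preimage = {h. \<exists>p\<in>\<Gamma>. aff_act p h = sol_mult s h}"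

lemma orbit_in_fixed_set_iff: "orbit \<Gamma> h \<in> fixed_set \<Gamma> s \<longleftrightarrow> h \<in> fixed_preimage"
proof
  assume "h \<in> fixed_preimage"
  then have "sol_mult s h \<in> orbit \<Gamma> h" unfolding fixed_preimage_def mem_orbit_iff by force
  then show "orbit \<Gamma> h \<in> fixed_set \<Gamma> s" unfolding fixed_set_def using orbit_eqI by blast
next
  assume "orbit \<Gamma> h \<in> fixed_set \<Gamma> s"
  then obtain g where g: "orbit \<Gamma> h = orbit \<Gamma> g" "orbit \<Gamma> (sol_mult s g) = orbit \<Gamma> g"
    unfolding fixed_set_def by auto
  obtain r where r: "r \<in> \<Gamma>" "h = aff_act r g" using g(1) mem_orbit_self mem_orbit_iff by blast
  obtain r' where r': "r' \<in> \<Gamma>" "\<And>h. sol_mult s (aff_act r h) = aff_act r' (sol_mult s h)"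
    using s_normalizes[OF r(1)] by blast
  have "sol_mult s h \<in> orbit \<Gamma> (sol_mult s g)" unfolding mem_orbit_iff using r r' by auto
  then have "sol_mult s h \<in> orbit \<Gamma> h" using g by simp
  then show "h \<in> fixed_preimage" unfolding fixed_preimage_def mem_orbit_iff by force
qed

lemma fixed_set_eq_image: "fixed_set \<Gamma> s = orbit \<Gamma> ` fixed_preimage"
proof -
  have "fixed_set \<Gamma> s \<subseteq> range (orbit \<Gamma>)" unfolding fixed_set_def by auto
  then show ?thesis using orbit_in_fixed_set_iff by blast
qed

lemma istopology_M_top: "istopology (\<lambda>U. U \<subseteq> orbit_space \<Gamma> \<and> open (\<Union>U))"
  unfolding istopology_def
proof (rule conjI; intro allI impI)
  fix S T assume S: "S \<subseteq> orbit_space \<Gamma> \<and> open (\<Union>S)" and T: "T \<subseteq> orbit_space \<Gamma> \<and> open (\<Union>T)"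
  have "\<Union>S \<inter> \<Union>T \<subseteq> \<Union>(S \<inter> T)"
  proof
    fix x assume "x \<in> \<Union>S \<inter> \<Union>T"
    then obtain X Y where XY: "X \<in> S" "Y \<in> T" "x \<in> X" "x \<in> Y" by auto
    obtain g h where "X = orbit \<Gamma> g" "Y = orbit \<Gamma> h" using XY S T unfolding orbit_space_def by blast
    then have "X = orbit \<Gamma> x" "Y = orbit \<Gamma> x" using XY orbit_eqI[of x g] orbit_eqI[of x h] by simp_all
    then have "X = Y" by simp
    then show "x \<in> \<Union>(S \<inter> T)" using XY by auto
  qed
  then have "\<Union>(S \<inter> T) = \<Union>S \<inter> \<Union>T" by auto
  then show "S \<inter> T \<subseteq> orbit_space \<Gamma> \<and> open (\<Union>(S \<inter> T))" using S T by auto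
next
  fix K assume K: "\<forall>U\<in>K. U \<subseteq> orbit_space \<Gamma> \<and> open (\<Union>U)"
  have "\<Union>(\<Union>K) = (\<Union>U\<in>K. \<Union>U)" by blast
  moreover have "open (\<Union>U\<in>K. \<Union>U)" using K by (intro open_UN) auto
  ultimately show "\<Union>K \<subseteq> orbit_space \<Gamma> \<and> open (\<Union>(\<Union>K))" using K by auto
qed

lemma openin_M_top: "openin (M_top \<Gamma>) U \<longleftrightarrow> U \<subseteq> orbit_space \<Gamma> \<and> open (\<Union>U)"
  unfolding M_top_def using istopology_M_top by simp

lemma orbit_in_orbit_space: "orbit \<Gamma> g \<in> orbit_space \<Gamma>"
  unfolding orbit_space_def by simp

lemma topspace_M_top: "topspace (M_top \<Gamma>) = orbit_space \<Gamma>"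
proof -
  have "\<Union>(orbit_space \<Gamma>) = UNIV" using mem_orbit_self orbit_in_orbit_space by blast
  then have "openin (M_top \<Gamma>) (orbit_space \<Gamma>)" unfolding openin_M_top by simp
  then have "orbit_space \<Gamma> \<subseteq> topspace (M_top \<Gamma>)" by (rule openin_subset)
  moreover have "topspace (M_top \<Gamma>) \<subseteq> orbit_space \<Gamma>"
    using openin_topspace[of "M_top \<Gamma>"] unfolding openin_M_top by blast
  ultimately show ?thesis by blast
qed

lemma orbit_in_iff_mem_Union:
  assumes "U \<subseteq> orbit_space \<Gamma>"
  shows "orbit \<Gamma> g \<in> U \<longleftrightarrow> g \<in> \<Union>U"
proof
  assume "g \<in> \<Union>U"
  then obtain X where X: "X \<in> U" "g \<in> X" by blast
  then obtain h where "X = orbit \<Gamma> h" using assms unfolding orbit_space_def by blast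
  then show "orbit \<Gamma> g \<in> U" using X orbit_eqI[of g h] by simp
qed (use mem_orbit_self in blast)

lemma continuous_map_orbit: "continuous_map euclidean (M_top \<Gamma>) (orbit \<Gamma>)"
  unfolding continuous_map
proof (intro conjI allI impI)
  show "orbit \<Gamma> ` topspace euclidean \<subseteq> topspace (M_top \<Gamma>)"
    unfolding topspace_M_top using orbit_in_orbit_space by blast
  fix U assume "openin (M_top \<Gamma>) U"
  then have U: "U \<subseteq> orbit_space \<Gamma>" "open (\<Union>U)" unfolding openin_M_top by auto
  have "{g \<in> topspace euclidean. orbit \<Gamma> g \<in> U} = \<Union>U"
    using orbit_in_iff_mem_Union[OF U(1)] by auto
  then show "openin euclidean {g \<in> topspace euclidean. orbit \<Gamma> g \<in> U}" using U(2) by simp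
qed

lemma open_aff_act_image:
  assumes "r \<in> \<Gamma>" "open S"
  shows "open (aff_act r ` S)"
proof -
  obtain r' where r': "\<And>g. aff_act r (aff_act r' g) = g" "\<And>g. aff_act r' (aff_act r g) = g"
    using inverse_in[OF assms(1)] by metis
  have eq: "aff_act r ` S = aff_act r' -` S \<inter> UNIV"
  proof (intro set_eqI iffI)
    fix y assume "y \<in> aff_act r ` S"
    then show "y \<in> aff_act r' -` S \<inter> UNIV" using r'(2) by blast
  next
    fix y assume "y \<in> aff_act r' -` S \<inter> UNIV"
    then have "aff_act r' y \<in> S" by simp
    then show "y \<in> aff_act r ` S" using r'(1)[of y] by (metis image_eqI)
  qed
  have "continuous_on UNIV (aff_act r')" using continuous_on_aff_act[OF continuous_on_id] by simp
  then have "open (aff_act r' -` S \<inter> UNIV)" using continuous_on_open_vimage[OF open_UNIV] assms(2) by blast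
  then show ?thesis by (simp only: eq)
qed

lemma openin_orbit_image:
  assumes "open S"
  shows "openin (M_top \<Gamma>) (orbit \<Gamma> ` S)"
  unfolding openin_M_top
proof
  show "orbit \<Gamma> ` S \<subseteq> orbit_space \<Gamma>" using orbit_in_orbit_space by blast
  have "\<Union>(orbit \<Gamma> ` S) = (\<Union>r\<in>\<Gamma>. aff_act r ` S)" unfolding orbit_def by blast
  moreover have "open (\<Union>r\<in>\<Gamma>. aff_act r ` S)" using open_aff_act_image assms by (intro open_UN) blast
  ultimately show "open (\<Union>(orbit \<Gamma> ` S))" by simp
qed

text \<open>The translation part of r1^-1 r2 is a continuous function \<Psi> of (h1, r1 h1, r2 h2, h2)
  that equals 1 at (g, k, k, g), so discreteness of \<Gamma> forces r1^-1 r2 = 1.\<close>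
lemma same_holonomy_nearby_acts_agree:
  assumes A: "A \<in> D4"
  shows "\<exists>\<delta>>0. \<forall>r1\<in>\<Gamma>. \<forall>r2\<in>\<Gamma>. \<forall>h1 h2. snd r1 = A \<longrightarrow> snd r2 = A \<longrightarrow>
           dist h1 g < \<delta> \<longrightarrow> dist h2 g < \<delta> \<longrightarrow> dist (aff_act r1 h1) k < \<delta> \<longrightarrow>
           dist (aff_act r2 h2) k < \<delta> \<longrightarrow> aff_act r1 = aff_act r2"
proof -
  obtain e where e: "e > 0"
    "\<And>p. p \<in> \<Gamma> \<Longrightarrow> snd p = mat2_one \<Longrightarrow> dist (fst p) sol_one < e \<Longrightarrow> p = aff_one"
    using discrete_at_one by blast
  define \<Psi> :: "sol \<times> sol \<times> sol \<times> sol \<Rightarrow> sol" where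
    "\<Psi> w = (case w of (h1, k1, k2, h2) \<Rightarrow> sol_aut (mat2_transpose A)
       (sol_mult (sol_inv (sol_mult k1 (sol_inv (sol_aut A h1)))) (sol_mult k2 (sol_inv (sol_aut A h2)))))"
    for w
  have "continuous_on UNIV \<Psi>"
    unfolding \<Psi>_def case_prod_beta
    by (intro continuous_on_sol_aut continuous_on_sol_mult continuous_on_sol_inv
        continuous_on_fst continuous_on_snd continuous_on_id)
  moreover have "\<Psi> (g, k, k, g) = sol_one" by (simp add: \<Psi>_def sol_mult_inv_left)
  ultimately obtain d where d: "d > 0" "\<And>w. dist w (g, k, k, g) < d \<Longrightarrow> dist (\<Psi> w) sol_one < e"
    using e(1) unfolding continuous_on_iff by (metis UNIV_I)
  show ?thesis
  proof (intro exI[of _ "d / 4"] conjI ballI allI impI)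
    fix r1 r2 h1 h2
    assume r: "r1 \<in> \<Gamma>" "r2 \<in> \<Gamma>" "snd r1 = A" "snd r2 = A"
      and close: "dist h1 g < d / 4" "dist h2 g < d / 4"
        "dist (aff_act r1 h1) k < d / 4" "dist (aff_act r2 h2) k < d / 4"
    obtain r1' where r1': "r1' \<in> \<Gamma>" "aff_mult r1 r1' = aff_one"
      "\<And>g. aff_act r1 (aff_act r1' g) = g" "\<And>g. aff_act r1' (aff_act r1 g) = g"
      using inverse_in[OF r(1)] by metis
    define t where "t = aff_mult r1' r2"
    have t: "t \<in> \<Gamma>" unfolding t_def using mult_in r1'(1) r(2) by blast
    have "snd r1' = mat2_transpose A" using holonomy_right_inverse[OF r(1) r1'(1,2)] r(3) by simp
    then have "snd t = mat2_one" unfolding t_def snd_aff_mult r(4) using mat2_mult_transpose_left[OF A] by simp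
    have "fst t = aff_act r1' (fst r2)" unfolding t_def fst_eq_aff_act_sol_one[of "aff_mult r1' r2"]
      by (simp add: act_mult r1'(1) r(2) fst_eq_aff_act_sol_one)
    also have "\<dots> = sol_aut (mat2_transpose A) (sol_mult (sol_inv (fst r1)) (fst r2))"
      using aff_act_solve[of r1 "aff_act r1' (fst r2)"] r1'(3) r(3) A by simp
    also have "\<dots> = \<Psi> (h1, aff_act r1 h1, aff_act r2 h2, h2)"
      unfolding \<Psi>_def using fst_eq_aff_act_mult_inv[of r1 h1] fst_eq_aff_act_mult_inv[of r2 h2] r(3,4) by simp
    finally have "fst t = \<Psi> (h1, aff_act r1 h1, aff_act r2 h2, h2)" .
    moreover have "dist (h1, aff_act r1 h1, aff_act r2 h2, h2) (g, k, k, g) < d"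
      using dist_Pair4_le[of h1 "aff_act r1 h1" "aff_act r2 h2" h2 g k k g] close by linarith
    ultimately have "t = aff_one" using d(2) e(2) t \<open>snd t = mat2_one\<close> by simp
    show "aff_act r1 = aff_act r2"
    proof
      fix x
      have "aff_act r2 x = aff_act r1 (aff_act t x)"
        unfolding t_def act_mult[OF r1'(1) r(2)] r1'(3) ..
      then show "aff_act r1 x = aff_act r2 x" using \<open>t = aff_one\<close> by simp
    qed
  qed (use d in simp)
qed

lemma holonomy_class_properly_discontinuous:
  assumes A: "A \<in> D4"
  shows "\<exists>\<delta>>0. \<forall>r\<in>\<Gamma>. \<forall>h. snd r = A \<longrightarrow> dist h g < \<delta> \<longrightarrow> dist (aff_act r h) k < \<delta> \<longrightarrow>
           aff_act r g = k"
proof -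
  obtain d where d: "d > 0" and agree: "\<And>r1 r2 h1 h2. r1 \<in> \<Gamma> \<Longrightarrow> r2 \<in> \<Gamma> \<Longrightarrow> snd r1 = A \<Longrightarrow>
      snd r2 = A \<Longrightarrow> dist h1 g < d \<Longrightarrow> dist h2 g < d \<Longrightarrow> dist (aff_act r1 h1) k < d \<Longrightarrow>
      dist (aff_act r2 h2) k < d \<Longrightarrow> aff_act r1 = aff_act r2"
    using same_holonomy_nearby_acts_agree[OF A, of g k] by metis
  show ?thesis
  proof (cases "\<exists>r\<in>\<Gamma>. \<exists>h. snd r = A \<and> dist h g < d \<and> dist (aff_act r h) k < d")
    case False
    then show ?thesis using d by blast
  next
    case True
    then obtain r0 h0 where r0: "r0 \<in> \<Gamma>" "snd r0 = A" "dist h0 g < d" "dist (aff_act r0 h0) k < d"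
      by blast
    obtain \<delta> where \<delta>: "\<delta> > 0" "\<And>h. dist h g < \<delta> \<Longrightarrow> dist (aff_act r0 h) k < \<delta> \<Longrightarrow> aff_act r0 g = k"
      using continuous_near_value_imp_eq[of "aff_act r0"] continuous_on_aff_act[OF continuous_on_id]
      by (metis (no_types))
    show ?thesis
    proof (intro exI[of _ "min d \<delta>"] conjI ballI allI impI)
      fix r h
      assume r: "r \<in> \<Gamma>" "snd r = A" "dist h g < min d \<delta>" "dist (aff_act r h) k < min d \<delta>"
      have "aff_act r = aff_act r0" using agree[of r r0 h h0] r r0 by simp
      then show "aff_act r g = k" using \<delta>(2)[of h] r(3,4) by simp
    qed (use d \<delta> in simp)
  qed
qed

lemma properly_discontinuous:
  "\<exists>\<delta>>0. \<forall>r\<in>\<Gamma>. \<forall>h. dist h g < \<delta> \<longrightarrow> dist (aff_act r h) k < \<delta> \<longrightarrow> aff_act r g = k"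
proof -
  have "\<exists>\<delta>>0. \<forall>A\<in>D4. \<forall>r\<in>\<Gamma>. \<forall>h. snd r = A \<longrightarrow> dist h g < \<delta> \<longrightarrow> dist (aff_act r h) k < \<delta> \<longrightarrow>
          aff_act r g = k"
  proof (rule finite_uniform_positive_bound[OF finite_D4 holonomy_class_properly_discontinuous])
    fix A and \<delta> \<delta>' :: real
    assume H: "\<forall>r\<in>\<Gamma>. \<forall>h. snd r = A \<longrightarrow> dist h g < \<delta> \<longrightarrow> dist (aff_act r h) k < \<delta> \<longrightarrow>
      aff_act r g = k" "\<delta>' \<le> \<delta>"
    show "\<forall>r\<in>\<Gamma>. \<forall>h. snd r = A \<longrightarrow> dist h g < \<delta>' \<longrightarrow> dist (aff_act r h) k < \<delta>' \<longrightarrow>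
      aff_act r g = k"
      using H by (meson order_less_le_trans)
  qed
  then show ?thesis using holonomy_in_D4 by blast
qed

lemma orbit_inj_on_ball: "\<exists>\<delta>>0. inj_on (orbit \<Gamma>) (ball g \<delta>)"
proof -
  obtain \<delta> where \<delta>: "\<delta> > 0" "\<And>r h. r \<in> \<Gamma> \<Longrightarrow> dist h g < \<delta> \<Longrightarrow> dist (aff_act r h) g < \<delta> \<Longrightarrow> aff_act r g = g"
    using properly_discontinuous[of g g] by blast
  have "h' = h" if hh: "h \<in> ball g \<delta>" "h' \<in> ball g \<delta>" "orbit \<Gamma> h = orbit \<Gamma> h'" for h h'
  proof -
    obtain r where r: "r \<in> \<Gamma>" "h' = aff_act r h" using hh(3) orbit_eq_iff mem_orbit_iff by metis
    then have "aff_act r g = g" using \<delta>(2) hh(1,2) by (simp add: dist_commute)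
    then have "r = aff_one" using fixed_point_imp_eq_one r(1) by blast
    then show ?thesis using r(2) by simp
  qed
  then show ?thesis using \<delta>(1) by (metis inj_onI)
qed

lemma fixed_preimage_near:
  assumes p: "p \<in> \<Gamma>" "aff_act p g = sol_mult s g"
  shows "\<exists>\<delta>>0. \<forall>h\<in>ball g \<delta>. h \<in> fixed_preimage \<longrightarrow> aff_act p h = sol_mult s h"
proof -
  obtain \<delta> where \<delta>: "\<delta> > 0" "\<And>r h. r \<in> \<Gamma> \<Longrightarrow> dist h g < \<delta> \<Longrightarrow>
      dist (aff_act r h) (sol_mult s g) < \<delta> \<Longrightarrow> aff_act r g = sol_mult s g"
    using properly_discontinuous[of g "sol_mult s g"] by blast
  have "aff_act p h = sol_mult s h" if h: "h \<in> ball g \<delta>" "h \<in> fixed_preimage" for h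
  proof -
    obtain p' where p': "p' \<in> \<Gamma>" "aff_act p' h = sol_mult s h"
      using h(2) unfolding fixed_preimage_def by blast
    have "dist (sol_mult s h) (sol_mult s g) < \<delta>"
      using h(1) dist_central_mult[of "1 / (2 * q)" h g] unfolding s_def by (simp add: dist_commute)
    then have "aff_act p' g = aff_act p g" using \<delta>(2)[OF p'(1)] h(1) p' p(2) by (simp add: dist_commute)
    then have "aff_act p' = aff_act p" by (rule act_eq_if_agree_at[OF p'(1) p(1)])
    then show ?thesis using p'(2) by metis
  qed
  then show ?thesis using \<delta>(1) by blast
qed

lemma slice_at_fixed_point:
  assumes "p \<in> \<Gamma>" "aff_act p g = sol_mult s g"
  obtains \<delta> where "\<delta> > 0" "inj_on (orbit \<Gamma>) (ball g \<delta>)"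
    "\<And>h. h \<in> ball g \<delta> \<Longrightarrow> h \<in> fixed_preimage \<Longrightarrow> aff_act p h = sol_mult s h"
proof -
  obtain \<delta>1 where \<delta>1: "\<delta>1 > 0" "inj_on (orbit \<Gamma>) (ball g \<delta>1)" using orbit_inj_on_ball by blast
  obtain \<delta>2 where \<delta>2: "\<delta>2 > 0" "\<forall>h\<in>ball g \<delta>2. h \<in> fixed_preimage \<longrightarrow> aff_act p h = sol_mult s h"
    using fixed_preimage_near[OF assms] by blast
  have "ball g (min \<delta>1 \<delta>2) \<subseteq> ball g \<delta>1" by auto
  then show ?thesis using that[of "min \<delta>1 \<delta>2"] \<delta>1 \<delta>2 inj_on_subset by force
qed

definition solution_chart :: "aff \<Rightarrow> (real \<times> real \<Rightarrow> sol) \<Rightarrow> (sol \<Rightarrow> real \<times> real) \<Rightarrow> bool" where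
  "solution_chart p \<phi> \<pi> \<longleftrightarrow> continuous_on UNIV \<phi> \<and> continuous_on UNIV \<pi> \<and> (\<forall>v. \<pi> (\<phi> v) = v) \<and>
     (\<forall>v. aff_act p (\<phi> v) = sol_mult s (\<phi> v)) \<and> (\<forall>h. aff_act p h = sol_mult s h \<longrightarrow> \<phi> (\<pi> h) = h)"

lemma s_mult: "sol_mult s (x, y, z, u) = (x, y, 1 / (2 * q) + z, u)"
  by (simp add: s_def central_mult)

text \<open>In each case the equation p h = s h fixes two of the coordinates (x, y, z) affinely in
  terms of the others and forces u0 = 0, leaving a plane parametrised by the two free ones.\<close>
lemma solution_chart_reflect_y:
  assumes "aff_act ((x0, y0, z0, u0), (1, 0, 0, -1)) g = sol_mult s g"
  shows "\<exists>\<phi> \<pi>. solution_chart ((x0, y0, z0, u0), (1, 0, 0, -1)) \<phi> \<pi>"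
proof -
  obtain x y z u where "g = (x, y, z, u)" by (cases g)
  then have 0: "x0 = 0" "u0 = 0" using assms by (auto simp: s_mult)
  let ?\<phi> = "\<lambda>v. (fst v, y0 / 2, (z0 - 1 / (2 * q)) / 2, snd v)"
  let ?\<pi> = "\<lambda>h::sol. (fst h, snd (snd (snd h)))"
  have "solution_chart ((x0, y0, z0, u0), (1, 0, 0, -1)) ?\<phi> ?\<pi>"
    unfolding solution_chart_def
    by (intro conjI allI impI continuous_on_coordinate_intros; clarsimp simp: s_mult 0 field_simps)
  then show ?thesis by blast
qed

lemma solution_chart_reflect_x:
  assumes "aff_act ((x0, y0, z0, u0), (-1, 0, 0, 1)) g = sol_mult s g"
  shows "\<exists>\<phi> \<pi>. solution_chart ((x0, y0, z0, u0), (-1, 0, 0, 1)) \<phi> \<pi>"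
proof -
  obtain x y z u where "g = (x, y, z, u)" by (cases g)
  then have 0: "y0 = 0" "u0 = 0" using assms by (auto simp: s_mult)
  let ?\<phi> = "\<lambda>v. (x0 / 2, fst v, (z0 - 1 / (2 * q)) / 2 + x0 / 2 * fst v, snd v)"
  let ?\<pi> = "\<lambda>h::sol. (fst (snd h), snd (snd (snd h)))"
  have "solution_chart ((x0, y0, z0, u0), (-1, 0, 0, 1)) ?\<phi> ?\<pi>"
    unfolding solution_chart_def
    by (intro conjI allI impI continuous_on_coordinate_intros; clarsimp simp: s_mult 0 field_simps)
  then show ?thesis by blast
qed

lemma solution_chart_reflect_xy:
  assumes "aff_act ((x0, y0, z0, u0), (-1, 0, 0, -1)) g = sol_mult s g"
  shows "\<exists>\<phi> \<pi>. solution_chart ((x0, y0, z0, u0), (-1, 0, 0, -1)) \<phi> \<pi>"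
proof -
  obtain x y z u where "g = (x, y, z, u)" by (cases g)
  then have u0: "u0 = 0" and z0: "z0 - x0 * y0 / 2 = 1 / (2 * q)"
    using assms by (auto simp: s_mult field_simps)
  have "2 * z0 = 2 * (1 / (2 * q)) + x0 * y0" using z0 by linarith
  then have 0: "u0 = 0" "z0 * 2 = x0 * y0 + 1 / q" using u0 by simp_all
  let ?\<phi> = "\<lambda>v. (x0 / 2, y0 / 2, fst v, snd v)"
  let ?\<pi> = "\<lambda>h::sol. (fst (snd (snd h)), snd (snd (snd h)))"
  have "solution_chart ((x0, y0, z0, u0), (-1, 0, 0, -1)) ?\<phi> ?\<pi>"
    unfolding solution_chart_def
    by (intro conjI allI impI continuous_on_coordinate_intros; clarsimp simp: s_mult 0 field_simps)
  then show ?thesis by blast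
qed

text \<open>For antidiagonal holonomy, p^2 g = s^(1 + det) g. If det = -1 then p^2 fixes g, contradicting
  torsion-freeness; if det = 1 then p^2 and s^2 agree at g, so p^2 would have trivial holonomy,
  whereas the square of an antidiagonal matrix of determinant 1 is -1.\<close>
lemma holonomy_not_antidiagonal:
  assumes p: "p \<in> \<Gamma>" "aff_act p g = sol_mult s g"
  shows "snd p \<notin> {(0, 1, 1, 0), (0, -1, -1, 0), (0, 1, -1, 0), (0, -1, 1, 0)}"
proof
  assume antidiag: "snd p \<in> {(0, 1, 1, 0), (0, -1, -1, 0), (0, 1, -1, 0), (0, -1, 1, 0)}"
  obtain a A where pA: "p = (a, A)" by (cases p)
  have A: "A \<in> D4" using holonomy_in_D4 p(1) pA by fastforce
  have pp: "aff_mult p p \<in> \<Gamma>" using mult_in p(1) by blast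
  have "aff_act (aff_mult p p) g = aff_act p (sol_mult (central (1 / (2 * q))) g)"
    using act_mult[OF p(1) p(1)] p(2) by (simp add: s_def)
  also have "\<dots> = sol_mult (central ((of_int (mat2_det A) + 1) / (2 * q))) g"
    using p(2) unfolding pA aff_act_central[OF A] s_def
    by (simp add: central_mult_central add_divide_distrib)
  finally have p2: "aff_act (aff_mult p p) g = sol_mult (central ((of_int (mat2_det A) + 1) / (2 * q))) g" .
  consider "mat2_det A = -1" | "mat2_det A = 1"
    using antidiag pA by (auto simp: mat2_det_def)
  then show False
  proof cases
    case 1
    then have "aff_mult p p = aff_one"
      using fixed_point_imp_eq_one[OF pp] p2 by (simp add: central_zero)
    then have "p = aff_one" using torsion_free[OF p(1), of 2] by (simp add: numeral_eq_Suc)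
    then show False using antidiag by (simp add: aff_one_def mat2_one_def)
  next
    case 2
    then have "aff_act (aff_mult p p) g = aff_act (central (1 / q), mat2_one) g"
      using p2 q_pos by (simp add: field_simps)
    then have "snd (aff_mult p p) = mat2_one"
      using holonomy_eq_if_act_eq[OF pp s_squared_in] by simp
    then show False using antidiag 2 pA by (auto simp: snd_aff_mult mat2_one_def mat2_det_def)
  qed
qed

lemma exists_solution_chart:
  assumes "g \<in> fixed_preimage"
  obtains p \<phi> \<pi> where "p \<in> \<Gamma>" "aff_act p g = sol_mult s g" "solution_chart p \<phi> \<pi>"
proof -
  obtain p where p: "p \<in> \<Gamma>" "aff_act p g = sol_mult s g"
    using assms unfolding fixed_preimage_def by blast
  obtain x0 y0 z0 u0 A where pA: "p = ((x0, y0, z0, u0), A)" by (metis prod.collapse)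
  have "A \<noteq> mat2_one"
  proof
    assume "A = mat2_one"
    then have "sol_mult (x0, y0, z0, u0) g = sol_mult s g" using p(2) pA by simp
    then have "(x0, y0, z0, u0) = s" by (rule sol_mult_right_cancel)
    then show False using p(1) pA s_notin \<open>A = mat2_one\<close> by simp
  qed
  moreover have "A \<in> D4" using holonomy_in_D4[OF p(1)] pA by simp
  moreover have "A \<notin> {(0, 1, 1, 0), (0, -1, -1, 0), (0, 1, -1, 0), (0, -1, 1, 0)}"
    using holonomy_not_antidiagonal[OF p] pA by simp
  ultimately have "A = (1, 0, 0, -1) \<or> A = (-1, 0, 0, 1) \<or> A = (-1, 0, 0, -1)"
    unfolding D4_eq mat2_one_def by blast
  then have "\<exists>\<phi> \<pi>. solution_chart p \<phi> \<pi>"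
    using solution_chart_reflect_y[of x0 y0 z0 u0 g] solution_chart_reflect_x[of x0 y0 z0 u0 g]
      solution_chart_reflect_xy[of x0 y0 z0 u0 g] p(2) unfolding pA by blast
  then show ?thesis using that p by blast
qed

lemma fixed_set_locally_planar:
  assumes "g \<in> fixed_preimage"
  shows "\<exists>U. openin (subtopology (M_top \<Gamma>) (fixed_set \<Gamma> s)) U \<and> orbit \<Gamma> g \<in> U \<and>
           subtopology (M_top \<Gamma>) U homeomorphic_space (euclidean :: (real \<times> real) topology)"
proof -
  obtain p \<phi> \<pi> where p: "p \<in> \<Gamma>" "aff_act p g = sol_mult s g" and "solution_chart p \<phi> \<pi>"
    using exists_solution_chart[OF assms] by blast
  then have \<phi>: "continuous_on UNIV \<phi>" "\<And>v. aff_act p (\<phi> v) = sol_mult s (\<phi> v)"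
    and \<pi>: "continuous_on UNIV \<pi>" "\<And>v. \<pi> (\<phi> v) = v"
    and \<phi>\<pi>: "\<And>h. aff_act p h = sol_mult s h \<Longrightarrow> \<phi> (\<pi> h) = h"
    unfolding solution_chart_def by auto
  obtain \<delta> where \<delta>: "\<delta> > 0" "inj_on (orbit \<Gamma>) (ball g \<delta>)"
    and on_plane: "\<And>h. h \<in> ball g \<delta> \<Longrightarrow> h \<in> fixed_preimage \<Longrightarrow> aff_act p h = sol_mult s h"
    using slice_at_fixed_point[OF p] by blast
  have g: "\<phi> (\<pi> g) = g" using \<phi>\<pi> p(2) .
  obtain \<rho> where \<rho>: "\<rho> > 0" "\<And>v. dist v (\<pi> g) < \<rho> \<Longrightarrow> dist (\<phi> v) g < \<delta>"
    using \<phi>(1) \<delta>(1) g unfolding continuous_on_iff by (metis UNIV_I)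
  define V where "V = ball (\<pi> g) \<rho>"
  define U where "U = orbit \<Gamma> ` \<phi> ` V"
  have \<phi>V: "\<phi> ` V \<subseteq> ball g \<delta>" using \<rho>(2) unfolding V_def by (auto simp: dist_commute)
  have "homeomorphic_map (top_of_set V) (subtopology (M_top \<Gamma>) U) (orbit \<Gamma> \<circ> \<phi>)"
    unfolding U_def using homeomorphic_map_through_open_quotient[OF continuous_map_orbit
      openin_orbit_image open_ball \<delta>(2) _ continuous_on_subset[OF \<phi>(1) subset_UNIV] \<phi>V
      continuous_on_subset[OF \<pi>(1) subset_UNIV] \<pi>(2)] by (simp add: V_def)
  then have "subtopology (M_top \<Gamma>) U homeomorphic_space (euclidean :: (real \<times> real) topology)"
    using ball_homeomorphic_space_euclidean[OF \<rho>(1)] unfolding V_def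
    by (meson homeomorphic_map_imp_homeomorphic_space homeomorphic_space_sym homeomorphic_space_trans)
  moreover have "openin (subtopology (M_top \<Gamma>) (fixed_set \<Gamma> s)) U"
  proof -
    have "open (\<pi> -` V \<inter> UNIV)"
      using continuous_on_open_vimage[OF open_UNIV, of \<pi>] \<pi>(1) open_ball unfolding V_def by simp
    then have "open (ball g \<delta> \<inter> \<pi> -` V)" by (simp add: open_Int)
    then have "openin (M_top \<Gamma>) (orbit \<Gamma> ` (ball g \<delta> \<inter> \<pi> -` V))" by (rule openin_orbit_image)
    moreover have "U = orbit \<Gamma> ` (ball g \<delta> \<inter> \<pi> -` V) \<inter> fixed_set \<Gamma> s"
    proof
      show "U \<subseteq> orbit \<Gamma> ` (ball g \<delta> \<inter> \<pi> -` V) \<inter> fixed_set \<Gamma> s"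
        unfolding U_def fixed_set_eq_image fixed_preimage_def using \<phi>V \<pi>(2) \<phi>(2) p(1) by fastforce
      show "orbit \<Gamma> ` (ball g \<delta> \<inter> \<pi> -` V) \<inter> fixed_set \<Gamma> s \<subseteq> U"
      proof
        fix x assume "x \<in> orbit \<Gamma> ` (ball g \<delta> \<inter> \<pi> -` V) \<inter> fixed_set \<Gamma> s"
        then obtain w where w: "w \<in> ball g \<delta>" "\<pi> w \<in> V" "x = orbit \<Gamma> w" "w \<in> fixed_preimage"
          using orbit_in_fixed_set_iff by auto
        then have "w = \<phi> (\<pi> w)" using on_plane \<phi>\<pi> by metis
        then show "x \<in> U" unfolding U_def using w by blast
      qed
    qed
    ultimately show ?thesis unfolding openin_subtopology by blast
  qed
  moreover have "orbit \<Gamma> g \<in> U"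
    unfolding U_def V_def using g \<rho>(1) by (metis centre_in_ball image_eqI)
  ultimately show ?thesis by blast
qed

end

theorem corollary8p3:
  fixes \<Gamma> :: "aff set" and q :: real
  assumes "infra_sol_group \<Gamma>"
    and "q > 0"
    and "\<Gamma> \<inter> {(central z, mat2_one) | z. True} = {(central (of_int k / q), mat2_one) | k. True}"
  shows "fixed_set \<Gamma> (central (1 / (2 * q))) = {} \<or>
         (\<forall>C \<in> connected_components_of (subtopology (M_top \<Gamma>) (fixed_set \<Gamma> (central (1 / (2 * q))))).
            two_dimensional (subtopology (M_top \<Gamma>) C))"
proof -
  interpret infra_sol_manifold \<Gamma> q using assms by unfold_locales
  have "\<forall>C \<in> connected_components_of (subtopology (M_top \<Gamma>) (fixed_set \<Gamma> s)).
          two_dimensional (subtopology (M_top \<Gamma>) C)"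
  proof (rule two_dimensional_connected_components)
    fix x assume "x \<in> fixed_set \<Gamma> s"
    then obtain g where "g \<in> fixed_preimage" "x = orbit \<Gamma> g" using fixed_set_eq_image by auto
    then show "\<exists>U. openin (subtopology (M_top \<Gamma>) (fixed_set \<Gamma> s)) U \<and> x \<in> U \<and>
        subtopology (M_top \<Gamma>) U homeomorphic_space (euclidean :: (real \<times> real) topology)"
      using fixed_set_locally_planar by blast
  qed
  then show ?thesis unfolding s_def by blast
qed

end
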